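(* Let $\eta\in(0,1)$ and $P_A,P_B>0$. The wideband coherent-state MAC with homodyne detection has capacity region (in nats per second) equal to the set of $(R_1,R_2)$, $R_1,R_2\ge0$, with $$R_1\le\sqrt{\frac{\eta P_A}{\pi\hbar}},\qquad R_2\le\sqrt{\frac{(1-\eta)P_B}{\pi\hbar}},\qquad R_1+R_2\le\sqrt{\frac{\eta P_A+(1-\eta)P_B}{\pi\hbar}},$$ and the wideband coherent-state MAC with heterodyne detection has the same capacity region.
   Context: Wideband model (continuum limit of frequency bins of width $\Delta=2\pi/T\to0$): Alice and Bob choose photon-number allocations $\bar n_A(\omega),\bar n_B(\omega)\ge0$ on $\omega\in(0,\infty)$ subject to the power constraints $\int_0^\infty\hbar\omega\,\bar n_A(\omega)\,\frac{d\omega}{2\pi}\le P_A$ and $\int_0^\infty\hbar\omega\,\bar n_B(\omega)\,\frac{d\omega}{2\pi}\le P_B$. The transmissivity $\eta$ is frequency independent. For homodyne detection, for given allocations the achievable set is $\{R_1\le\int_0^\infty\frac12\log(1+4\eta\bar n_A(\omega))\frac{d\omega}{2\pi},\ R_2\le\int_0^\infty\frac12\log(1+4(1-\eta)\bar n_B(\omega))\frac{d\omega}{2\pi},\ R_1+R_2\le\int_0^\infty\frac12\log(1+4\eta\bar n_A(\omega)+4(1-\eta)\bar n_B(\omega))\frac{d\omega}{2\pi}\}$; for heterodyne detection the integrands are replaced by $\log(1+\eta\bar n_A)$, $\log(1+(1-\eta)\bar n_B)$, $\log(1+\eta\bar n_A+(1-\eta)\bar n_B)$. The capacity region is the convex hull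 of the union of these sets over admissible allocations. Logarithms are natural. *)

theory Defs
  imports "HOL-Analysis.Analysis"
begin

definition freq_integral :: "(real \<Rightarrow> real) \<Rightarrow> ennreal" where
  "freq_integral f = (\<integral>\<^sup>+ \<omega>. indicator {0<..} \<omega> * ennreal (f \<omega> / (2 * pi)) \<partial>lborel)"

text \<open>Admissible photon-number allocation under power constraint P (hbar the reduced
  Planck constant).\<close>
definition admissible :: "real \<Rightarrow> real \<Rightarrow> (real \<Rightarrow> real) \<Rightarrow> bool" where
  "admissible hbar P n \<longleftrightarrow>
     n \<in> borel_measurable lborel \<and> (\<forall>\<omega>>0. 0 \<le> n \<omega>) \<and>
     freq_integral (\<lambda>\<omega>. hbar * \<omega> * n \<omega>) \<le> ennreal P"

definition homodyne_set :: "real \<Rightarrow> (real \<Rightarrow> real) \<Rightarrow> (real \<Rightarrow> real) \<Rightarrow> (real \<times> real) set" where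
  "homodyne_set \<eta> nA nB = {(R1, R2). 0 \<le> R1 \<and> 0 \<le> R2 \<and>
     ennreal R1 \<le> freq_integral (\<lambda>\<omega>. (1/2) * ln (1 + 4 * \<eta> * nA \<omega>)) \<and>
     ennreal R2 \<le> freq_integral (\<lambda>\<omega>. (1/2) * ln (1 + 4 * (1 - \<eta>) * nB \<omega>)) \<and>
     ennreal (R1 + R2) \<le> freq_integral (\<lambda>\<omega>. (1/2) * ln (1 + 4 * \<eta> * nA \<omega> + 4 * (1 - \<eta>) * nB \<omega>))}"

definition heterodyne_set :: "real \<Rightarrow> (real \<Rightarrow> real) \<Rightarrow> (real \<Rightarrow> real) \<Rightarrow> (real \<times> real) set" where
  "heterodyne_set \<eta> nA nB = {(R1, R2). 0 \<le> R1 \<and> 0 \<le> R2 \<and>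
     ennreal R1 \<le> freq_integral (\<lambda>\<omega>. ln (1 + \<eta> * nA \<omega>)) \<and>
     ennreal R2 \<le> freq_integral (\<lambda>\<omega>. ln (1 + (1 - \<eta>) * nB \<omega>)) \<and>
     ennreal (R1 + R2) \<le> freq_integral (\<lambda>\<omega>. ln (1 + \<eta> * nA \<omega> + (1 - \<eta>) * nB \<omega>))}"

definition capacity_region ::
  "(real \<Rightarrow> (real \<Rightarrow> real) \<Rightarrow> (real \<Rightarrow> real) \<Rightarrow> (real \<times> real) set) \<Rightarrow>
   real \<Rightarrow> real \<Rightarrow> real \<Rightarrow> real \<Rightarrow> (real \<times> real) set" where
  "capacity_region S hbar \<eta> PA PB =
     convex hull (\<Union> {S \<eta> nA nB | nA nB. admissible hbar PA nA \<and> admissible hbar PB nB})"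

end

theory Submission
  imports Defs "HOL-Real_Asymp.Real_Asymp"
begin

text \<open>
  For a normalised allocation y = m n the power constraint reads
  \<open>\<integral> \<omega> y d\<omega>/2\<pi> \<le> E\<close> with \<open>E = m P / \<hbar>\<close>. By concavity of ln, the water-filling
  allocation \<open>y\<^sub>c(\<omega>) = (c/\<omega> - 1)\<^sup>+\<close> maximises the pointwise Lagrangian
  \<open>ln (1 + y) - \<omega> y / c\<close>; integrating this inequality bounds the rate
  \<open>\<integral> ln (1 + y) d\<omega>/2\<pi>\<close> by \<open>E/c + c/4\<pi>\<close>, which is \<open>sqrt (E/\<pi>)\<close> at the level
  \<open>c = sqrt (4\<pi>E)\<close> where \<open>y\<^sub>c\<close> has power exactly E. This bounds each single-user rate,
  and also the sum rate, because \<open>\<eta> n\<^sub>A + (1 - \<eta>) n\<^sub>B\<close> is an allocation of power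
  \<open>\<eta> P\<^sub>A + (1 - \<eta>) P\<^sub>B\<close>; hence every achievable set lies in the pentagon.
  Conversely, cutting the water-filling allocation of the total power at the level belonging
  to user A gives A its maximal rate and, since \<open>ln (1 + u + v) \<le> ln (1 + u) + ln (1 + v)\<close>,
  leaves B at least the remaining sum rate (successive decoding). These corner points and
  their projections onto the axes span the pentagon. Homodyne and heterodyne detection are
  the cases \<open>\<kappa> ln (1 + m \<cdot>)\<close> with \<open>(\<kappa>, m) = (1/2, 4)\<close> and \<open>(1, 1)\<close>; only
  \<open>\<kappa>\<^sup>2 m = 1\<close> enters the computation, so both give the same region.
\<close>

lemma nn_integral_FTC_Ioo:
  fixes F f :: "real \<Rightarrow> real"
  assumes "a < b" and "continuous_on {a..b} F"
    and "\<And>x. a < x \<Longrightarrow> x < b \<Longrightarrow> (F has_real_derivative f x) (at x)"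
    and "\<And>x. a < x \<Longrightarrow> x < b \<Longrightarrow> 0 \<le> f x"
  shows "(\<integral>\<^sup>+x. ennreal (f x) * indicator {a<..<b} x \<partial>lborel) = ennreal (F b - F a)"
proof -
  have "(f has_integral F b - F a) {a..b}"
    using assms by (intro fundamental_theorem_of_calculus_interior)
      (auto simp: has_real_derivative_iff_has_vector_derivative[symmetric])
  then have "(f has_integral F b - F a) {a<..<b}"
    by (simp add: has_integral_Icc_iff_Ioo)
  then show ?thesis
    using assms(4) by (intro nn_integral_has_integral_lebesgue') auto
qed

lemma freq_integral_FTC:
  fixes F f :: "real \<Rightarrow> real"
  assumes "0 < c" and "continuous_on {0..c} F"
    and "\<And>\<omega>. 0 < \<omega> \<Longrightarrow> \<omega> < c \<Longrightarrow> (F has_real_derivative f \<omega>) (at \<omega>)"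
    and "\<And>\<omega>. 0 < \<omega> \<Longrightarrow> \<omega> < c \<Longrightarrow> 0 \<le> f \<omega>"
    and "\<And>\<omega>. c \<le> \<omega> \<Longrightarrow> f \<omega> = 0"
  shows "freq_integral f = ennreal ((F c - F 0) / (2 * pi))"
proof -
  have "freq_integral f = (\<integral>\<^sup>+\<omega>. ennreal (f \<omega> / (2 * pi)) * indicator {0<..<c} \<omega> \<partial>lborel)"
    unfolding freq_integral_def
    by (rule nn_integral_cong) (auto simp: indicator_def not_less assms(5))
  also have "\<dots> = ennreal (F c / (2 * pi) - F 0 / (2 * pi))"
    using assms(1,2,4)
    by (intro nn_integral_FTC_Ioo) (auto intro!: continuous_intros derivative_eq_intros assms(3))
  finally show ?thesis
    by (simp add: diff_divide_distrib)
qed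

lemma freq_integral_cmult:
  assumes "0 \<le> k" and [measurable]: "f \<in> borel_measurable borel"
  shows "freq_integral (\<lambda>\<omega>. k * f \<omega>) = ennreal k * freq_integral f"
proof -
  have "freq_integral (\<lambda>\<omega>. k * f \<omega>)
      = (\<integral>\<^sup>+\<omega>. ennreal k * (indicator {0<..} \<omega> * ennreal (f \<omega> / (2 * pi))) \<partial>lborel)"
    unfolding freq_integral_def using \<open>0 \<le> k\<close>
    by (intro nn_integral_cong) (simp add: ennreal_mult' mult.left_commute flip: times_divide_eq_right)
  also have "\<dots> = ennreal k * freq_integral f"
    unfolding freq_integral_def by (rule nn_integral_cmult) measurable
  finally show ?thesis .
qed

lemma freq_integral_add:
  assumes [measurable]: "f \<in> borel_measurable borel" "g \<in> borel_measurable borel"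
    and "\<And>\<omega>. 0 < \<omega> \<Longrightarrow> 0 \<le> f \<omega>" and "\<And>\<omega>. 0 < \<omega> \<Longrightarrow> 0 \<le> g \<omega>"
  shows "freq_integral (\<lambda>\<omega>. f \<omega> + g \<omega>) = freq_integral f + freq_integral g"
proof -
  have "freq_integral (\<lambda>\<omega>. f \<omega> + g \<omega>)
      = (\<integral>\<^sup>+\<omega>. indicator {0<..} \<omega> * ennreal (f \<omega> / (2 * pi))
               + indicator {0<..} \<omega> * ennreal (g \<omega> / (2 * pi)) \<partial>lborel)"
    unfolding freq_integral_def using assms(3,4)
    by (intro nn_integral_cong)
      (simp add: indicator_def add_divide_distrib ennreal_plus[symmetric] del: ennreal_plus)
  also have "\<dots> = freq_integral f + freq_integral g"
    unfolding freq_integral_def by (rule nn_integral_add) measurable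
  finally show ?thesis .
qed

lemma freq_integral_add_cmult:
  assumes "0 \<le> k" and [measurable]: "f \<in> borel_measurable borel" "g \<in> borel_measurable borel"
    and "\<And>\<omega>. 0 < \<omega> \<Longrightarrow> 0 \<le> f \<omega>" and "\<And>\<omega>. 0 < \<omega> \<Longrightarrow> 0 \<le> g \<omega>"
  shows "freq_integral (\<lambda>\<omega>. f \<omega> + k * g \<omega>) = freq_integral f + ennreal k * freq_integral g"
  using assms by (simp add: freq_integral_add freq_integral_cmult)

lemma freq_integral_mono:
  assumes "\<And>\<omega>. 0 < \<omega> \<Longrightarrow> f \<omega> \<le> g \<omega>"
  shows "freq_integral f \<le> freq_integral g"
  unfolding freq_integral_def
  by (rule nn_integral_mono) (auto simp: indicator_def intro!: ennreal_leI divide_right_mono assms)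

section \<open>Water-filling\<close>

definition waterfill :: "real \<Rightarrow> real \<Rightarrow> real" where
  "waterfill c \<omega> = (if \<omega> < c then c / \<omega> - 1 else 0)"

lemma waterfill_measurable [measurable]: "waterfill c \<in> borel_measurable borel"
  unfolding waterfill_def by measurable

lemma waterfill_nonneg: "0 < \<omega> \<Longrightarrow> 0 \<le> waterfill c \<omega>"
  unfolding waterfill_def by (auto simp: field_simps)

lemma waterfill_mono: "0 < \<omega> \<Longrightarrow> c \<le> c' \<Longrightarrow> waterfill c \<omega> \<le> waterfill c' \<omega>"
  unfolding waterfill_def by (auto simp: field_simps divide_right_mono)

lemma freq_integral_ln_waterfill:
  assumes "0 < c"
  shows "freq_integral (\<lambda>\<omega>. ln (1 + waterfill c \<omega>)) = ennreal (c / (2 * pi))"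
proof -
  define F where "F x = x * ln (c / x) + x" for x
  have "continuous_on {0..c} F"
  proof (rule continuous_on_IccI)
    show "(F \<longlongrightarrow> F 0) (at_right 0)"
      unfolding F_def using assms by simp real_asymp
    show "(F \<longlongrightarrow> F x) (at x)" if "0 < x" for x
      unfolding F_def using that assms by (intro tendsto_intros) auto
    then show "(F \<longlongrightarrow> F c) (at_left c)"
      using assms by (simp add: tendsto_at_iff_tendsto_nhds filterlim_at_split)
  qed fact
  moreover have "(F has_real_derivative ln (1 + waterfill c x)) (at x)" if "0 < x" "x < c" for x
    unfolding F_def waterfill_def using that assms
    by (auto intro!: derivative_eq_intros simp: field_simps)
  ultimately have "freq_integral (\<lambda>\<omega>. ln (1 + waterfill c \<omega>)) = ennreal ((F c - F 0) / (2 * pi))"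
    using assms by (intro freq_integral_FTC) (auto simp: waterfill_def)
  then show ?thesis
    by (simp add: F_def)
qed

lemma freq_integral_power_waterfill:
  assumes "0 < c"
  shows "freq_integral (\<lambda>\<omega>. \<omega> * waterfill c \<omega>) = ennreal (c\<^sup>2 / (4 * pi))"
proof -
  have "freq_integral (\<lambda>\<omega>. \<omega> * waterfill c \<omega>) = ennreal (((c * c - c\<^sup>2 / 2) - (c * 0 - 0\<^sup>2 / 2)) / (2 * pi))"
    using assms
    by (intro freq_integral_FTC[where F = "\<lambda>x. c * x - x\<^sup>2 / 2"])
      (auto intro!: continuous_intros derivative_eq_intros simp: waterfill_def field_simps)
  then show ?thesis
    by (simp add: power2_eq_square)
qed

lemma waterfill_maximizes_lagrangian:
  assumes "0 < c" and "0 < \<omega>" and "0 \<le> y"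
  shows "ln (1 + y) + \<omega> * waterfill c \<omega> / c \<le> ln (1 + waterfill c \<omega>) + \<omega> * y / c"
proof (cases "\<omega> < c")
  case True
  have "ln ((1 + y) * \<omega> / c) \<le> (1 + y) * \<omega> / c - 1"
    using assms by (intro ln_le_minus_one) simp
  moreover have "ln ((1 + y) * \<omega> / c) = ln (1 + y) - ln (c / \<omega>)"
    using assms by (simp add: ln_div ln_mult)
  moreover have "(1 + y) * \<omega> / c = \<omega> / c + \<omega> * y / c" and "\<omega> * waterfill c \<omega> / c = 1 - \<omega> / c"
    using True assms by (simp_all add: waterfill_def field_simps)
  ultimately show ?thesis
    using True by (simp add: waterfill_def)
next
  case False
  have "ln (1 + y) \<le> y"
    using assms by (intro ln_add_one_self_le_self)
  also have "y \<le> \<omega> * y / c"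
    using False assms by (simp add: field_simps mult_right_mono)
  finally show ?thesis
    using False by (simp add: waterfill_def)
qed

lemma freq_integral_ln_le_sqrt:
  assumes [measurable]: "y \<in> borel_measurable borel" and y_nonneg: "\<And>\<omega>. 0 < \<omega> \<Longrightarrow> 0 \<le> y \<omega>"
    and power: "freq_integral (\<lambda>\<omega>. \<omega> * y \<omega>) \<le> ennreal E" and "0 < E"
  shows "freq_integral (\<lambda>\<omega>. ln (1 + y \<omega>)) \<le> ennreal (sqrt (E / pi))"
proof -
  define c where "c = sqrt (4 * pi * E)"
    \<comment> \<open>the water level at which the water-filling allocation has power exactly \<open>E\<close>\<close>
  have "0 < c"
    using \<open>0 < E\<close> by (simp add: c_def)
  have c_sq: "c\<^sup>2 = 4 * pi * E"
    using \<open>0 < E\<close> by (simp add: c_def)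
  have rate: "c / (2 * pi) = sqrt (E / pi)"
    using \<open>0 < c\<close> c_sq by (intro real_sqrt_unique[symmetric]) (auto simp: field_simps power2_eq_square)
  have quarter: "ennreal (1 / c) * ennreal (c\<^sup>2 / (4 * pi)) = ennreal (c / (4 * pi))"
    "ennreal (1 / c) * ennreal E = ennreal (c / (4 * pi))"
    using \<open>0 < c\<close> \<open>0 < E\<close> c_sq
    by (simp_all add: ennreal_mult'[symmetric] power2_eq_square field_simps)
  have "freq_integral (\<lambda>\<omega>. ln (1 + y \<omega>)) + ennreal (1 / c) * ennreal (c\<^sup>2 / (4 * pi))
      = freq_integral (\<lambda>\<omega>. ln (1 + y \<omega>) + 1 / c * (\<omega> * waterfill c \<omega>))"
    using \<open>0 < c\<close> y_nonneg waterfill_nonneg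
    by (subst freq_integral_add_cmult) (auto simp: freq_integral_power_waterfill)
  also have "\<dots> \<le> freq_integral (\<lambda>\<omega>. ln (1 + waterfill c \<omega>) + 1 / c * (\<omega> * y \<omega>))"
    using \<open>0 < c\<close> y_nonneg waterfill_maximizes_lagrangian by (intro freq_integral_mono) simp
  also have "\<dots> = ennreal (c / (2 * pi)) + ennreal (1 / c) * freq_integral (\<lambda>\<omega>. \<omega> * y \<omega>)"
    using \<open>0 < c\<close> y_nonneg waterfill_nonneg
    by (subst freq_integral_add_cmult) (auto simp: freq_integral_ln_waterfill)
  also have "\<dots> \<le> ennreal (c / (2 * pi)) + ennreal (1 / c) * ennreal E"
    by (intro add_left_mono mult_left_mono power) simp
  finally have "ennreal (c / (4 * pi)) + freq_integral (\<lambda>\<omega>. ln (1 + y \<omega>))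
      \<le> ennreal (c / (4 * pi)) + ennreal (c / (2 * pi))"
    unfolding quarter by (simp add: add.commute)
  then show ?thesis
    using rate by (simp add: ennreal_add_left_cancel_le)
qed

lemma freq_integral_waterfill_level:
  assumes "0 < E"
  shows "freq_integral (\<lambda>\<omega>. \<omega> * waterfill (sqrt (4 * pi * E)) \<omega>) = ennreal E"
    and "freq_integral (\<lambda>\<omega>. ln (1 + waterfill (sqrt (4 * pi * E)) \<omega>)) = ennreal (sqrt (E / pi))"
proof -
  have "sqrt (4 * pi * E) / (2 * pi) = sqrt (E / pi)"
    using assms by (intro real_sqrt_unique[symmetric]) (auto simp: field_simps power2_eq_square)
  then show "freq_integral (\<lambda>\<omega>. ln (1 + waterfill (sqrt (4 * pi * E)) \<omega>)) = ennreal (sqrt (E / pi))"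
    using assms by (simp add: freq_integral_ln_waterfill)
  show "freq_integral (\<lambda>\<omega>. \<omega> * waterfill (sqrt (4 * pi * E)) \<omega>) = ennreal E"
    using assms by (simp add: freq_integral_power_waterfill)
qed

lemma ln_one_plus_add_le:
  fixes u v :: real
  assumes "0 \<le> u" and "0 \<le> v"
  shows "ln (1 + (u + v)) \<le> ln (1 + u) + ln (1 + v)"
proof -
  have "ln (1 + (u + v)) \<le> ln ((1 + u) * (1 + v))"
    using assms by (intro ln_mono) (auto simp: algebra_simps)
  then show ?thesis
    using assms by (simp add: ln_mult)
qed

lemma freq_integral_waterfill_increment:
  assumes "0 < E\<^sub>1" and "E\<^sub>1 \<le> E\<^sub>2"
  defines "v \<equiv> \<lambda>\<omega>. waterfill (sqrt (4 * pi * E\<^sub>2)) \<omega> - waterfill (sqrt (4 * pi * E\<^sub>1)) \<omega>"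
  shows "freq_integral (\<lambda>\<omega>. \<omega> * v \<omega>) = ennreal (E\<^sub>2 - E\<^sub>1)"
    and "ennreal (sqrt (E\<^sub>2 / pi) - sqrt (E\<^sub>1 / pi)) \<le> freq_integral (\<lambda>\<omega>. ln (1 + v \<omega>))"
proof -
  let ?u = "waterfill (sqrt (4 * pi * E\<^sub>1))" and ?w = "waterfill (sqrt (4 * pi * E\<^sub>2))"
  have v_nonneg: "0 \<le> v \<omega>" if "0 < \<omega>" for \<omega>
    unfolding v_def using assms(2) that by (simp add: waterfill_mono)
  have "ennreal E\<^sub>2 = freq_integral (\<lambda>\<omega>. \<omega> * ?u \<omega> + \<omega> * v \<omega>)"
    using assms by (simp add: v_def right_diff_distrib freq_integral_waterfill_level)
  also have "\<dots> = ennreal E\<^sub>1 + freq_integral (\<lambda>\<omega>. \<omega> * v \<omega>)"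
    using assms v_nonneg waterfill_nonneg
    by (simp add: v_def freq_integral_add freq_integral_waterfill_level)
  finally show "freq_integral (\<lambda>\<omega>. \<omega> * v \<omega>) = ennreal (E\<^sub>2 - E\<^sub>1)"
    using \<open>0 < E\<^sub>1\<close> by (simp add: ennreal_minus ennreal_add_diff_cancel_left flip: ennreal_minus)
  have "ennreal (sqrt (E\<^sub>2 / pi)) = freq_integral (\<lambda>\<omega>. ln (1 + ?w \<omega>))"
    using assms by (simp add: freq_integral_waterfill_level)
  also have "\<dots> \<le> freq_integral (\<lambda>\<omega>. ln (1 + ?u \<omega>) + ln (1 + v \<omega>))"
  proof (rule freq_integral_mono)
    fix \<omega> :: real
    assume "0 < \<omega>"
    then have "ln (1 + (?u \<omega> + v \<omega>)) \<le> ln (1 + ?u \<omega>) + ln (1 + v \<omega>)"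
      by (intro ln_one_plus_add_le waterfill_nonneg v_nonneg)
    then show "ln (1 + ?w \<omega>) \<le> ln (1 + ?u \<omega>) + ln (1 + v \<omega>)"
      by (simp add: v_def)
  qed
  also have "\<dots> = ennreal (sqrt (E\<^sub>1 / pi)) + freq_integral (\<lambda>\<omega>. ln (1 + v \<omega>))"
    using assms v_nonneg waterfill_nonneg
    by (subst freq_integral_add) (auto simp: v_def freq_integral_waterfill_level)
  finally have "ennreal (sqrt (E\<^sub>2 / pi)) \<le> ennreal (sqrt (E\<^sub>1 / pi)) + freq_integral (\<lambda>\<omega>. ln (1 + v \<omega>))" .
  then show "ennreal (sqrt (E\<^sub>2 / pi) - sqrt (E\<^sub>1 / pi)) \<le> freq_integral (\<lambda>\<omega>. ln (1 + v \<omega>))"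
    using \<open>0 < E\<^sub>1\<close> by (subst ennreal_minus[symmetric]) (auto simp: ennreal_minus_le_iff)
qed

lemma waterfill_successive_allocations:
  assumes "0 < E\<^sub>1" and "E\<^sub>1 \<le> E\<^sub>2"
  obtains y\<^sub>1 y\<^sub>2 :: "real \<Rightarrow> real"
  where "y\<^sub>1 \<in> borel_measurable borel" and "y\<^sub>2 \<in> borel_measurable borel"
    and "\<And>\<omega>. 0 < \<omega> \<Longrightarrow> 0 \<le> y\<^sub>1 \<omega>" and "\<And>\<omega>. 0 < \<omega> \<Longrightarrow> 0 \<le> y\<^sub>2 \<omega>"
    and "freq_integral (\<lambda>\<omega>. \<omega> * y\<^sub>1 \<omega>) = ennreal E\<^sub>1"
    and "freq_integral (\<lambda>\<omega>. \<omega> * y\<^sub>2 \<omega>) = ennreal (E\<^sub>2 - E\<^sub>1)"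
    and "freq_integral (\<lambda>\<omega>. ln (1 + y\<^sub>1 \<omega>)) = ennreal (sqrt (E\<^sub>1 / pi))"
    and "freq_integral (\<lambda>\<omega>. ln (1 + y\<^sub>1 \<omega> + y\<^sub>2 \<omega>)) = ennreal (sqrt (E\<^sub>2 / pi))"
    and "ennreal (sqrt (E\<^sub>2 / pi) - sqrt (E\<^sub>1 / pi)) \<le> freq_integral (\<lambda>\<omega>. ln (1 + y\<^sub>2 \<omega>))"
proof -
  let ?u = "waterfill (sqrt (4 * pi * E\<^sub>1))" and ?w = "waterfill (sqrt (4 * pi * E\<^sub>2))"
  show thesis
  proof (rule that[of ?u "\<lambda>\<omega>. ?w \<omega> - ?u \<omega>"])
    show "freq_integral (\<lambda>\<omega>. \<omega> * (?w \<omega> - ?u \<omega>)) = ennreal (E\<^sub>2 - E\<^sub>1)"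
      "ennreal (sqrt (E\<^sub>2 / pi) - sqrt (E\<^sub>1 / pi)) \<le> freq_integral (\<lambda>\<omega>. ln (1 + (?w \<omega> - ?u \<omega>)))"
      using assms by (rule freq_integral_waterfill_increment)+
  qed (use assms in \<open>auto simp: waterfill_nonneg waterfill_mono freq_integral_waterfill_level\<close>)
qed

lemma admissible_normalized_iff:
  assumes "0 < hbar" and "0 < m"
  shows "admissible hbar P n \<longleftrightarrow> n \<in> borel_measurable borel \<and> (\<forall>\<omega>>0. 0 \<le> n \<omega>) \<and>
           freq_integral (\<lambda>\<omega>. \<omega> * (m * n \<omega>)) \<le> ennreal (m * P / hbar)"
proof (cases "n \<in> borel_measurable borel")
  case True
  have "freq_integral (\<lambda>\<omega>. \<omega> * (m * n \<omega>)) = freq_integral (\<lambda>\<omega>. m / hbar * (hbar * \<omega> * n \<omega>))"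
    using assms by (simp add: field_simps)
  also have "\<dots> = ennreal (m / hbar) * freq_integral (\<lambda>\<omega>. hbar * \<omega> * n \<omega>)"
    using assms True by (intro freq_integral_cmult) auto
  moreover have "ennreal (m * P / hbar) = ennreal (m / hbar) * ennreal P"
    using assms ennreal_mult'[of "m / hbar" P] by simp
  ultimately show ?thesis
    using assms True by (simp add: admissible_def ennreal_mult_le_mult_iff)
qed (simp add: admissible_def)

lemma admissible_scale:
  assumes "admissible hbar P n" and "0 \<le> s"
  shows "admissible hbar (s * P) (\<lambda>\<omega>. s * n \<omega>)"
proof -
  have [measurable]: "n \<in> borel_measurable borel"
    using assms(1) by (simp add: admissible_def)
  have "freq_integral (\<lambda>\<omega>. hbar * \<omega> * (s * n \<omega>)) = ennreal s * freq_integral (\<lambda>\<omega>. hbar * \<omega> * n \<omega>)"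
    using assms(2) by (subst freq_integral_cmult[symmetric]) (auto simp: mult_ac)
  also have "\<dots> \<le> ennreal s * ennreal P"
    using assms(1) by (intro mult_left_mono) (auto simp: admissible_def)
  finally show ?thesis
    using assms by (auto simp: admissible_def ennreal_mult')
qed

lemma admissible_add:
  assumes "admissible hbar P n" and "admissible hbar P' n'" and "0 \<le> P" and "0 \<le> P'" and "0 \<le> hbar"
  shows "admissible hbar (P + P') (\<lambda>\<omega>. n \<omega> + n' \<omega>)"
proof -
  have [measurable]: "n \<in> borel_measurable borel" "n' \<in> borel_measurable borel"
    and "\<forall>\<omega>>0. 0 \<le> n \<omega>" "\<forall>\<omega>>0. 0 \<le> n' \<omega>"
    using assms by (auto simp: admissible_def)
  then have "freq_integral (\<lambda>\<omega>. hbar * \<omega> * (n \<omega> + n' \<omega>))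
      = freq_integral (\<lambda>\<omega>. hbar * \<omega> * n \<omega>) + freq_integral (\<lambda>\<omega>. hbar * \<omega> * n' \<omega>)"
    using assms(5) by (subst freq_integral_add[symmetric]) (auto simp: distrib_left)
  also have "\<dots> \<le> ennreal P + ennreal P'"
    using assms by (intro add_mono) (auto simp: admissible_def)
  finally show ?thesis
    using assms by (auto simp: admissible_def ennreal_plus)
qed

lemma mult_sqrt_cancel:
  assumes "0 < \<kappa>" and "\<kappa>\<^sup>2 * m = 1" and "0 \<le> X"
  shows "\<kappa> * sqrt (m * X) = sqrt X"
proof -
  have "\<kappa> * sqrt (m * X) = sqrt (\<kappa>\<^sup>2) * sqrt (m * X)"
    using assms by simp
  also have "\<dots> = sqrt (\<kappa>\<^sup>2 * m * X)"
    by (simp add: real_sqrt_mult mult.assoc)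
  finally show ?thesis
    using assms by simp
qed

lemma rate_le_sqrt_power:
  assumes "admissible hbar P n" and "0 < P" and "0 < hbar" and "0 < \<kappa>" and "\<kappa>\<^sup>2 * m = 1"
  shows "freq_integral (\<lambda>\<omega>. \<kappa> * ln (1 + m * n \<omega>)) \<le> ennreal (sqrt (P / (pi * hbar)))"
proof -
  have "0 < m"
    using assms(4,5) zero_less_mult_pos[of "\<kappa>\<^sup>2" m] by simp
  then have [measurable]: "n \<in> borel_measurable borel" and "\<forall>\<omega>>0. 0 \<le> n \<omega>"
    and power: "freq_integral (\<lambda>\<omega>. \<omega> * (m * n \<omega>)) \<le> ennreal (m * P / hbar)"
    using assms admissible_normalized_iff by blast+
  then have "freq_integral (\<lambda>\<omega>. ln (1 + m * n \<omega>)) \<le> ennreal (sqrt (m * P / hbar / pi))"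
    using \<open>0 < m\<close> assms(2,3) by (intro freq_integral_ln_le_sqrt) auto
  also have "m * P / hbar / pi = m * (P / (pi * hbar))"
    by simp
  finally have "freq_integral (\<lambda>\<omega>. \<kappa> * ln (1 + m * n \<omega>)) \<le> ennreal \<kappa> * ennreal (sqrt (m * (P / (pi * hbar))))"
    using assms(4) by (simp add: freq_integral_cmult mult_left_mono)
  also have "\<dots> = ennreal (sqrt (P / (pi * hbar)))"
    using assms mult_sqrt_cancel[of \<kappa> m "P / (pi * hbar)"] by (simp add: ennreal_mult'[symmetric])
  finally show ?thesis .
qed

lemma successive_decoding_allocations:
  assumes "0 < hbar" and "0 < \<kappa>" and \<kappa>m: "\<kappa>\<^sup>2 * m = 1" and "0 < Q\<^sub>1" and "0 < Q\<^sub>2"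
  obtains n\<^sub>1 n\<^sub>2 where "admissible hbar Q\<^sub>1 n\<^sub>1" and "admissible hbar Q\<^sub>2 n\<^sub>2"
    and "freq_integral (\<lambda>\<omega>. \<kappa> * ln (1 + m * n\<^sub>1 \<omega>)) = ennreal (sqrt (Q\<^sub>1 / (pi * hbar)))"
    and "freq_integral (\<lambda>\<omega>. \<kappa> * ln (1 + m * n\<^sub>1 \<omega> + m * n\<^sub>2 \<omega>))
           = ennreal (sqrt ((Q\<^sub>1 + Q\<^sub>2) / (pi * hbar)))"
    and "ennreal (sqrt ((Q\<^sub>1 + Q\<^sub>2) / (pi * hbar)) - sqrt (Q\<^sub>1 / (pi * hbar)))
           \<le> freq_integral (\<lambda>\<omega>. \<kappa> * ln (1 + m * n\<^sub>2 \<omega>))"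
proof -
  have "0 < m"
    using assms(2) \<kappa>m zero_less_mult_pos[of "\<kappa>\<^sup>2" m] by simp
  define E\<^sub>1 E\<^sub>2 where "E\<^sub>1 = m * Q\<^sub>1 / hbar" and "E\<^sub>2 = m * (Q\<^sub>1 + Q\<^sub>2) / hbar"
  have "0 < E\<^sub>1" "E\<^sub>1 \<le> E\<^sub>2" and E_diff: "E\<^sub>2 - E\<^sub>1 = m * Q\<^sub>2 / hbar"
    using assms \<open>0 < m\<close> by (auto simp: E\<^sub>1_def E\<^sub>2_def field_simps)
  have rate: "\<kappa> * sqrt (m * Q / hbar / pi) = sqrt (Q / (pi * hbar))" if "0 \<le> Q" for Q
    using assms that mult_sqrt_cancel[of \<kappa> m "Q / (pi * hbar)"] by (simp add: mult.commute[of hbar pi])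
  obtain y\<^sub>1 y\<^sub>2 where [measurable]: "y\<^sub>1 \<in> borel_measurable borel" "y\<^sub>2 \<in> borel_measurable borel"
    and y_nonneg: "\<And>\<omega>. 0 < \<omega> \<Longrightarrow> 0 \<le> y\<^sub>1 \<omega>" "\<And>\<omega>. 0 < \<omega> \<Longrightarrow> 0 \<le> y\<^sub>2 \<omega>"
    and power: "freq_integral (\<lambda>\<omega>. \<omega> * y\<^sub>1 \<omega>) = ennreal E\<^sub>1"
      "freq_integral (\<lambda>\<omega>. \<omega> * y\<^sub>2 \<omega>) = ennreal (E\<^sub>2 - E\<^sub>1)"
    and rates: "freq_integral (\<lambda>\<omega>. ln (1 + y\<^sub>1 \<omega>)) = ennreal (sqrt (E\<^sub>1 / pi))"
      "freq_integral (\<lambda>\<omega>. ln (1 + y\<^sub>1 \<omega> + y\<^sub>2 \<omega>)) = ennreal (sqrt (E\<^sub>2 / pi))"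
      "ennreal (sqrt (E\<^sub>2 / pi) - sqrt (E\<^sub>1 / pi)) \<le> freq_integral (\<lambda>\<omega>. ln (1 + y\<^sub>2 \<omega>))"
    using waterfill_successive_allocations[OF \<open>0 < E\<^sub>1\<close> \<open>E\<^sub>1 \<le> E\<^sub>2\<close>] by blast
  show thesis
  proof
    show "admissible hbar Q\<^sub>1 (\<lambda>\<omega>. y\<^sub>1 \<omega> / m)" "admissible hbar Q\<^sub>2 (\<lambda>\<omega>. y\<^sub>2 \<omega> / m)"
      using \<open>0 < m\<close> y_nonneg power E_diff
      by (auto simp: admissible_normalized_iff[OF assms(1) \<open>0 < m\<close>] E\<^sub>1_def)
    show "freq_integral (\<lambda>\<omega>. \<kappa> * ln (1 + m * (y\<^sub>1 \<omega> / m))) = ennreal (sqrt (Q\<^sub>1 / (pi * hbar)))"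
      using assms \<open>0 < m\<close> rate[of Q\<^sub>1] rates
      by (simp add: freq_integral_cmult E\<^sub>1_def ennreal_mult'[symmetric])
    show "freq_integral (\<lambda>\<omega>. \<kappa> * ln (1 + m * (y\<^sub>1 \<omega> / m) + m * (y\<^sub>2 \<omega> / m)))
        = ennreal (sqrt ((Q\<^sub>1 + Q\<^sub>2) / (pi * hbar)))"
      using assms \<open>0 < m\<close> rate[of "Q\<^sub>1 + Q\<^sub>2"] rates
      by (simp add: freq_integral_cmult E\<^sub>2_def ennreal_mult'[symmetric])
    have "ennreal (sqrt ((Q\<^sub>1 + Q\<^sub>2) / (pi * hbar)) - sqrt (Q\<^sub>1 / (pi * hbar)))
        = ennreal \<kappa> * ennreal (sqrt (E\<^sub>2 / pi) - sqrt (E\<^sub>1 / pi))"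
      using assms rate[of Q\<^sub>1] rate[of "Q\<^sub>1 + Q\<^sub>2"]
      by (simp add: E\<^sub>1_def E\<^sub>2_def right_diff_distrib ennreal_mult'[symmetric])
    also have "\<dots> \<le> ennreal \<kappa> * freq_integral (\<lambda>\<omega>. ln (1 + y\<^sub>2 \<omega>))"
      by (intro mult_left_mono rates) simp
    also have "\<dots> = freq_integral (\<lambda>\<omega>. \<kappa> * ln (1 + m * (y\<^sub>2 \<omega> / m)))"
      using assms \<open>0 < m\<close> by (simp add: freq_integral_cmult)
    finally show "ennreal (sqrt ((Q\<^sub>1 + Q\<^sub>2) / (pi * hbar)) - sqrt (Q\<^sub>1 / (pi * hbar)))
        \<le> freq_integral (\<lambda>\<omega>. \<kappa> * ln (1 + m * (y\<^sub>2 \<omega> / m)))" .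
  qed
qed

section \<open>The pentagon\<close>

definition pentagon :: "real \<Rightarrow> real \<Rightarrow> real \<Rightarrow> (real \<times> real) set" where
  "pentagon a b s = {(x, y). 0 \<le> x \<and> 0 \<le> y \<and> x \<le> a \<and> y \<le> b \<and> x + y \<le> s}"

lemma convex_pentagon: "convex (pentagon a b s)"
proof (rule convexI)
  fix p q :: "real \<times> real" and u v :: real
  assume "p \<in> pentagon a b s" "q \<in> pentagon a b s" "0 \<le> u" "0 \<le> v" "u + v = 1"
  then show "u *\<^sub>R p + v *\<^sub>R q \<in> pentagon a b s"
    using convex_bound_le[of "fst p" a "fst q" u v] convex_bound_le[of "snd p" b "snd q" u v]
      convex_bound_le[of "fst p + snd p" s "fst q + snd q" u v]
    by (cases p, cases q) (auto simp: pentagon_def algebra_simps)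
qed

lemma pentagon_right_edge_in_convex:
  fixes a b s y :: real
  assumes "convex H" and "(a, 0) \<in> H" and "(a, s - a) \<in> H" and "(s - b, b) \<in> H"
    and "a \<le> s" and "0 \<le> y" and "y \<le> b"
  shows "(min a (s - y), y) \<in> H"
proof (cases "y \<le> s - a")
  case True
  show ?thesis
  proof (cases "y = 0")
    case False
    define t where "t = y / (s - a)"
    have "0 \<le> t" "t \<le> 1" and t: "t * (s - a) = y"
      using True False \<open>0 \<le> y\<close> by (auto simp: t_def field_split_simps)
    then have "(1 - t) *\<^sub>R (a, 0) + t *\<^sub>R (a, s - a) \<in> H"
      using assms by (intro convexD_alt) auto
    moreover have "(1 - t) *\<^sub>R (a, 0) + t *\<^sub>R (a, s - a) = (a, y)"
      using t by (simp add: algebra_simps)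
    ultimately show ?thesis
      using True by simp
  qed (use assms in simp)
next
  case False
  define t where "t = (y - (s - a)) / (b - (s - a))"
  have "0 \<le> t" "t \<le> 1" and t: "t * (b - (s - a)) = y - (s - a)"
    using False \<open>y \<le> b\<close> by (auto simp: t_def field_split_simps)
  then have "(1 - t) *\<^sub>R (a, s - a) + t *\<^sub>R (s - b, b) \<in> H"
    using assms by (intro convexD_alt) auto
  moreover have "(1 - t) *\<^sub>R (a, s - a) + t *\<^sub>R (s - b, b) = (s - y, y)"
    using t by (simp add: algebra_simps)
  ultimately show ?thesis
    using False by simp
qed

lemma pentagon_subset_convex:
  assumes "convex H" and "(0, 0) \<in> H" and "(a, 0) \<in> H" and "(a, s - a) \<in> H"
    and "(s - b, b) \<in> H" and "(0, b) \<in> H" and "0 < b" and "a \<le> s"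
  shows "pentagon a b s \<subseteq> H"
proof clarify
  fix x y
  assume "(x, y) \<in> pentagon a b s"
  then have "0 \<le> x" "x \<le> min a (s - y)" and y: "0 \<le> y" "y \<le> b"
    by (auto simp: pentagon_def)
  have "(1 - y / b) *\<^sub>R (0, 0) + (y / b) *\<^sub>R (0, b) \<in> H"
    using assms y by (intro convexD_alt) auto
  then have left: "(0, y) \<in> H"
    using \<open>0 < b\<close> by simp
  have right: "(min a (s - y), y) \<in> H"
    using assms y by (intro pentagon_right_edge_in_convex)
  show "(x, y) \<in> H"
  proof (cases "x = 0")
    case False
    let ?p = "min a (s - y)"
    have "0 < ?p"
      using False \<open>0 \<le> x\<close> \<open>x \<le> ?p\<close> by linarith
    then have "(1 - x / ?p) *\<^sub>R (0, y) + (x / ?p) *\<^sub>R (?p, y) \<in> H"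
      using assms left right \<open>0 \<le> x\<close> \<open>x \<le> ?p\<close> by (intro convexD_alt) auto
    moreover have "(1 - x / ?p) *\<^sub>R (0, y) + (x / ?p) *\<^sub>R (?p, y) = (x, y)"
      using \<open>0 < ?p\<close> by (auto simp: algebra_simps min_def)
    ultimately show ?thesis
      by simp
  qed (use left in simp)
qed

definition mac_rate_set ::
  "real \<Rightarrow> real \<Rightarrow> real \<Rightarrow> (real \<Rightarrow> real) \<Rightarrow> (real \<Rightarrow> real) \<Rightarrow> (real \<times> real) set" where
  "mac_rate_set \<kappa> m \<eta> nA nB = {(R1, R2). 0 \<le> R1 \<and> 0 \<le> R2 \<and>
     ennreal R1 \<le> freq_integral (\<lambda>\<omega>. \<kappa> * ln (1 + m * \<eta> * nA \<omega>)) \<and>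
     ennreal R2 \<le> freq_integral (\<lambda>\<omega>. \<kappa> * ln (1 + m * (1 - \<eta>) * nB \<omega>)) \<and>
     ennreal (R1 + R2) \<le> freq_integral (\<lambda>\<omega>. \<kappa> * ln (1 + m * \<eta> * nA \<omega> + m * (1 - \<eta>) * nB \<omega>))}"

lemma homodyne_set_eq: "homodyne_set = mac_rate_set (1 / 2) 4"
  by (intro ext) (simp add: homodyne_set_def mac_rate_set_def)

lemma heterodyne_set_eq: "heterodyne_set = mac_rate_set 1 1"
  by (intro ext) (simp add: heterodyne_set_def mac_rate_set_def)

lemma mac_rate_set_swap:
  "(y, x) \<in> mac_rate_set \<kappa> m (1 - \<eta>) nB nA \<longleftrightarrow> (x, y) \<in> mac_rate_set \<kappa> m \<eta> nA nB"
  by (auto simp: mac_rate_set_def add_ac)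

lemma mac_rate_set_downward_closed:
  assumes "(x, y) \<in> mac_rate_set \<kappa> m \<eta> nA nB"
    and "0 \<le> x'" and "x' \<le> x" and "0 \<le> y'" and "y' \<le> y"
  shows "(x', y') \<in> mac_rate_set \<kappa> m \<eta> nA nB"
  using assms unfolding mac_rate_set_def
  by (clarsimp simp del: ennreal_plus) (meson order_trans ennreal_leI add_mono)

lemma mac_rate_set_subset_pentagon:
  assumes "admissible hbar PA nA" and "admissible hbar PB nB"
    and "0 < hbar" and "0 < \<kappa>" and "\<kappa>\<^sup>2 * m = 1" and "0 < \<eta>" and "\<eta> < 1" and "0 < PA" and "0 < PB"
  shows "mac_rate_set \<kappa> m \<eta> nA nB \<subseteq>
           pentagon (sqrt (\<eta> * PA / (pi * hbar))) (sqrt ((1 - \<eta>) * PB / (pi * hbar)))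
             (sqrt ((\<eta> * PA + (1 - \<eta>) * PB) / (pi * hbar)))"
proof -
  have A: "admissible hbar (\<eta> * PA) (\<lambda>\<omega>. \<eta> * nA \<omega>)"
    and B: "admissible hbar ((1 - \<eta>) * PB) (\<lambda>\<omega>. (1 - \<eta>) * nB \<omega>)"
    using assms by (auto intro: admissible_scale)
  have "freq_integral (\<lambda>\<omega>. \<kappa> * ln (1 + m * \<eta> * nA \<omega>)) \<le> ennreal (sqrt (\<eta> * PA / (pi * hbar)))"
    using rate_le_sqrt_power[OF A] assms by (simp add: mult.assoc)
  moreover have "freq_integral (\<lambda>\<omega>. \<kappa> * ln (1 + m * (1 - \<eta>) * nB \<omega>))
      \<le> ennreal (sqrt ((1 - \<eta>) * PB / (pi * hbar)))"
    using rate_le_sqrt_power[OF B] assms by (simp add: mult.assoc)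
  moreover have "freq_integral (\<lambda>\<omega>. \<kappa> * ln (1 + m * \<eta> * nA \<omega> + m * (1 - \<eta>) * nB \<omega>))
      \<le> ennreal (sqrt ((\<eta> * PA + (1 - \<eta>) * PB) / (pi * hbar)))"
  proof -
    have sum: "admissible hbar (\<eta> * PA + (1 - \<eta>) * PB) (\<lambda>\<omega>. \<eta> * nA \<omega> + (1 - \<eta>) * nB \<omega>)"
      using assms by (intro admissible_add A B) auto
    have "0 < \<eta> * PA + (1 - \<eta>) * PB"
      using assms by (simp add: add_pos_pos)
    from rate_le_sqrt_power[OF sum this assms(3-5)] show ?thesis
      by (simp add: distrib_left mult.assoc add.assoc)
  qed
  moreover have le_of_ennreal: "x \<le> y" if "ennreal x \<le> X" and "X \<le> ennreal y" and "0 \<le> y" for x y X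
    using order_trans[OF that(1,2)] that(3) by simp
  ultimately show ?thesis
    unfolding mac_rate_set_def pentagon_def
    using assms by (clarsimp simp del: ennreal_plus)
qed

lemma mac_corner_achievable:
  assumes "0 < hbar" and "0 < \<kappa>" and "\<kappa>\<^sup>2 * m = 1" and "0 < \<eta>" and "\<eta> < 1" and "0 < PA" and "0 < PB"
  obtains nA nB where "admissible hbar PA nA" and "admissible hbar PB nB"
    and "(sqrt (\<eta> * PA / (pi * hbar)),
          sqrt ((\<eta> * PA + (1 - \<eta>) * PB) / (pi * hbar)) - sqrt (\<eta> * PA / (pi * hbar)))
         \<in> mac_rate_set \<kappa> m \<eta> nA nB"
proof -
  obtain n\<^sub>1 n\<^sub>2 where n\<^sub>1: "admissible hbar (\<eta> * PA) n\<^sub>1" and n\<^sub>2: "admissible hbar ((1 - \<eta>) * PB) n\<^sub>2"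
    and rates: "freq_integral (\<lambda>\<omega>. \<kappa> * ln (1 + m * n\<^sub>1 \<omega>)) = ennreal (sqrt (\<eta> * PA / (pi * hbar)))"
      "freq_integral (\<lambda>\<omega>. \<kappa> * ln (1 + m * n\<^sub>1 \<omega> + m * n\<^sub>2 \<omega>))
         = ennreal (sqrt ((\<eta> * PA + (1 - \<eta>) * PB) / (pi * hbar)))"
      "ennreal (sqrt ((\<eta> * PA + (1 - \<eta>) * PB) / (pi * hbar)) - sqrt (\<eta> * PA / (pi * hbar)))
         \<le> freq_integral (\<lambda>\<omega>. \<kappa> * ln (1 + m * n\<^sub>2 \<omega>))"
    using successive_decoding_allocations[of hbar \<kappa> m "\<eta> * PA" "(1 - \<eta>) * PB"] assms by auto
  show thesis
  proof
    show "admissible hbar PA (\<lambda>\<omega>. n\<^sub>1 \<omega> / \<eta>)" "admissible hbar PB (\<lambda>\<omega>. n\<^sub>2 \<omega> / (1 - \<eta>))"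
      using admissible_scale[OF n\<^sub>1, of "1 / \<eta>"] admissible_scale[OF n\<^sub>2, of "1 / (1 - \<eta>)"] assms
      by simp_all
    have "sqrt (\<eta> * PA / (pi * hbar)) \<le> sqrt ((\<eta> * PA + (1 - \<eta>) * PB) / (pi * hbar))"
      using assms by (intro real_sqrt_le_mono divide_right_mono) auto
    then show "(sqrt (\<eta> * PA / (pi * hbar)),
          sqrt ((\<eta> * PA + (1 - \<eta>) * PB) / (pi * hbar)) - sqrt (\<eta> * PA / (pi * hbar)))
         \<in> mac_rate_set \<kappa> m \<eta> (\<lambda>\<omega>. n\<^sub>1 \<omega> / \<eta>) (\<lambda>\<omega>. n\<^sub>2 \<omega> / (1 - \<eta>))"
      using rates assms by (simp add: mac_rate_set_def)
  qed
qed

lemma mac_capacity_region: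
  assumes "0 < hbar" and "0 < \<kappa>" and "\<kappa>\<^sup>2 * m = 1" and "0 < \<eta>" and "\<eta> < 1" and "0 < PA" and "0 < PB"
  shows "convex hull (\<Union> {mac_rate_set \<kappa> m \<eta> nA nB | nA nB. admissible hbar PA nA \<and> admissible hbar PB nB})
       = pentagon (sqrt (\<eta> * PA / (pi * hbar))) (sqrt ((1 - \<eta>) * PB / (pi * hbar)))
           (sqrt ((\<eta> * PA + (1 - \<eta>) * PB) / (pi * hbar)))"
    (is "convex hull ?U = pentagon ?a ?b ?s")
proof
  show "convex hull ?U \<subseteq> pentagon ?a ?b ?s"
    using mac_rate_set_subset_pentagon assms by (intro hull_minimal convex_pentagon) blast
  have "0 < ?b" "?a \<le> ?s" "?b \<le> ?s"
    using assms by (auto intro!: real_sqrt_le_mono divide_right_mono)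
  obtain nA nB where "admissible hbar PA nA" "admissible hbar PB nB"
    and A: "(?a, ?s - ?a) \<in> mac_rate_set \<kappa> m \<eta> nA nB"
    using mac_corner_achievable assms by blast
  moreover have "(0, 0) \<in> mac_rate_set \<kappa> m \<eta> nA nB" "(?a, 0) \<in> mac_rate_set \<kappa> m \<eta> nA nB"
    using assms \<open>?a \<le> ?s\<close> by (auto intro: mac_rate_set_downward_closed[OF A])
  ultimately have "(0, 0) \<in> convex hull ?U" "(?a, 0) \<in> convex hull ?U" "(?a, ?s - ?a) \<in> convex hull ?U"
    using A by (blast intro: hull_inc)+
  obtain nA' nB' where "admissible hbar PA nA'" "admissible hbar PB nB'"
    and "(?b, ?s - ?b) \<in> mac_rate_set \<kappa> m (1 - \<eta>) nB' nA'"
    using mac_corner_achievable[of hbar \<kappa> m "1 - \<eta>" PB PA] assms by (simp add: add.commute) blast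
  moreover from this have B: "(?s - ?b, ?b) \<in> mac_rate_set \<kappa> m \<eta> nA' nB'"
    by (simp add: mac_rate_set_swap)
  moreover have "(0, ?b) \<in> mac_rate_set \<kappa> m \<eta> nA' nB'"
    using assms \<open>?b \<le> ?s\<close> by (auto intro: mac_rate_set_downward_closed[OF B])
  ultimately have "(?s - ?b, ?b) \<in> convex hull ?U" "(0, ?b) \<in> convex hull ?U"
    by (blast intro: hull_inc)+
  show "pentagon ?a ?b ?s \<subseteq> convex hull ?U"
    by (intro pentagon_subset_convex convex_convex_hull) fact+
qed

theorem mainTheorem6:
  fixes hbar \<eta> PA PB :: real
  assumes "0 < hbar" and "0 < \<eta>" and "\<eta> < 1" and "0 < PA" and "0 < PB"
  shows "capacity_region homodyne_set hbar \<eta> PA PB =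
           {(R1, R2). 0 \<le> R1 \<and> 0 \<le> R2 \<and>
              R1 \<le> sqrt (\<eta> * PA / (pi * hbar)) \<and>
              R2 \<le> sqrt ((1 - \<eta>) * PB / (pi * hbar)) \<and>
              R1 + R2 \<le> sqrt ((\<eta> * PA + (1 - \<eta>) * PB) / (pi * hbar))} \<and>
         capacity_region heterodyne_set hbar \<eta> PA PB =
           capacity_region homodyne_set hbar \<eta> PA PB"
proof -
  have "capacity_region homodyne_set hbar \<eta> PA PB = pentagon (sqrt (\<eta> * PA / (pi * hbar)))
      (sqrt ((1 - \<eta>) * PB / (pi * hbar))) (sqrt ((\<eta> * PA + (1 - \<eta>) * PB) / (pi * hbar)))"
    unfolding capacity_region_def homodyne_set_eq
    using assms by (intro mac_capacity_region) (auto simp: power2_eq_square)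
  moreover have "capacity_region heterodyne_set hbar \<eta> PA PB = pentagon (sqrt (\<eta> * PA / (pi * hbar)))
      (sqrt ((1 - \<eta>) * PB / (pi * hbar))) (sqrt ((\<eta> * PA + (1 - \<eta>) * PB) / (pi * hbar)))"
    unfolding capacity_region_def heterodyne_set_eq
    using assms by (intro mac_capacity_region) auto
  ultimately show ?thesis
    by (simp add: pentagon_def)
qed

end
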